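(* Let $\mathcal{A}$ and $\mathcal{B}$ be configurations of $d$ doors such that $\mathcal{A}$ dominates $\mathcal{B}$. Then for every knock sequence $\pi$, $\mathbb{T}_{\mathcal{A}}(\pi)\le\mathbb{T}_{\mathcal{B}}(\pi)$.
   Context: Dependent doors model. Fix an integer $d\ge 2$ and doors $1,\dots,d$, all initially closed; once a door opens it stays open forever. A configuration $\mathcal{C}$ specifies for each door $i$ a function $\phi_i^{\mathcal{C}}$ mapping every finite nonempty sequence $(X_1,\dots,X_n)$ of subsets of $\{1,\dots,i-1\}$ to $[0,1]$: $\phi_i^{\mathcal{C}}(X_1,\dots,X_n)$ is the probability that door $i$ has opened during $n$ knocks on it, where $X_j$ is the set of open doors among $\{1,\dots,i-1\}$ at the time of the $j$-th knock on door $i$ (so a closed door $i$ opens at its $n$-th knock with conditional probability $(\phi_i(X_1..X_n)-\phi_i(X_1..X_{n-1}))/(1-\phi_i(X_1..X_{n-1}))$, with $\phi_i$ of the empty sequence equal to $0$). Configurations are assumed monotone ($\phi_i(X')\le\phi_i(X)$ whenever $X'$ is a, not necessarily consecutive, subsequence of $X$) and positively correlated ($\phi_i(X'_1,\dots,X'_n)\le\phi_i(X_1,\dots,X_n)$ whenever $X'_j\subseteq X_j$ for all $j$). Configuration $\mathcal{A}$ dominates configuration $\mathcal{B}$ if $\phi_i^{\mathcal{A}}(X)\ge\phi_i^{\mathcal{B}}(X)$ for every door $i$ and every finite nonempty sequence $X$ of subsets of $\{1,\dots,i-1\}$. A knock sequence $\pi$ is an infinite sequence of door indices, executed in order without any feedback;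 $\mathbb{T}_{\mathcal{C}}(\pi)$ is the expected number of knocks until all $d$ doors are open. *)

theory Defs
  imports "HOL-Probability.Probability" "HOL-Library.Sublist"
begin

text \<open>Doors are numbered 1..d.  A configuration is a function
  phi :: nat => nat set list => real, where phi i X is the probability that
  door i has opened during length X knocks, X being the list of sets of open
  doors among 1..i-1 at the times of these knocks.  Only arguments that are
  nonempty lists of subsets of {1..<i} are meaningful.\<close>

type_synonym config = "nat \<Rightarrow> nat set list \<Rightarrow> real"

definition valid_seq :: "nat \<Rightarrow> nat set list \<Rightarrow> bool" where
  "valid_seq i X \<longleftrightarrow> X \<noteq> [] \<and> (\<forall>S\<in>set X. S \<subseteq> {1..<i})"

definition is_configuration :: "nat \<Rightarrow> config \<Rightarrow> bool" where
  "is_configuration d \<phi> \<longleftrightarrow>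
     (\<forall>i\<in>{1..d}. \<forall>X. valid_seq i X \<longrightarrow> 0 \<le> \<phi> i X \<and> \<phi> i X \<le> 1)"

definition monotone_config :: "nat \<Rightarrow> config \<Rightarrow> bool" where
  "monotone_config d \<phi> \<longleftrightarrow>
     (\<forall>i\<in>{1..d}. \<forall>X X'. valid_seq i X \<longrightarrow> valid_seq i X' \<longrightarrow> subseq X' X
        \<longrightarrow> \<phi> i X' \<le> \<phi> i X)"

definition pos_correlated :: "nat \<Rightarrow> config \<Rightarrow> bool" where
  "pos_correlated d \<phi> \<longleftrightarrow>
     (\<forall>i\<in>{1..d}. \<forall>X X'. valid_seq i X \<longrightarrow> valid_seq i X' \<longrightarrow> list_all2 (\<subseteq>) X' X
        \<longrightarrow> \<phi> i X' \<le> \<phi> i X)"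

definition dominates :: "nat \<Rightarrow> config \<Rightarrow> config \<Rightarrow> bool" where
  "dominates d \<A> \<B> \<longleftrightarrow> (\<forall>i\<in>{1..d}. \<forall>X. valid_seq i X \<longrightarrow> \<B> i X \<le> \<A> i X)"

definition phi0 :: "config \<Rightarrow> nat \<Rightarrow> nat set list \<Rightarrow> real" where
  "phi0 \<phi> i X = (if X = [] then 0 else \<phi> i X)"

text \<open>Given the history hs = [S_0, ..., S_k] of sets of open doors before knocks
  0..k (S_0 = {}), the sequence X_1..X_n of sets of open doors among 1..i-1
  at the times of the knocks on door i = pi k so far (including knock k).\<close>
definition knock_hist :: "(nat \<Rightarrow> nat) \<Rightarrow> nat \<Rightarrow> nat set list \<Rightarrow> nat set list" where
  "knock_hist \<pi> k hs = [hs ! m \<inter> {1..<\<pi> k}. m \<leftarrow> [0..<Suc k], \<pi> m = \<pi> k]"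

text \<open>Conditional probability that a closed door pi k opens at knock k.\<close>
definition open_prob :: "config \<Rightarrow> (nat \<Rightarrow> nat) \<Rightarrow> nat \<Rightarrow> nat set list \<Rightarrow> real" where
  "open_prob \<phi> \<pi> k hs =
     (let i = \<pi> k; X = knock_hist \<pi> k hs
      in (phi0 \<phi> i X - phi0 \<phi> i (butlast X)) / (1 - phi0 \<phi> i (butlast X)))"

text \<open>Distribution of the history [S_0, ..., S_t] of sets of open doors after
  0, 1, ..., t knocks of the (feedback-free) knock sequence pi.\<close>
fun traj :: "config \<Rightarrow> (nat \<Rightarrow> nat) \<Rightarrow> nat \<Rightarrow> nat set list pmf" where
  "traj \<phi> \<pi> 0 = return_pmf [{}]"
| "traj \<phi> \<pi> (Suc k) = traj \<phi> \<pi> k \<bind> (\<lambda>hs.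
     if \<pi> k \<in> last hs then return_pmf (hs @ [last hs])
     else map_pmf (\<lambda>b. hs @ [if b then insert (\<pi> k) (last hs) else last hs])
            (bernoulli_pmf (open_prob \<phi> \<pi> k hs)))"

text \<open>Expected number of knocks until all d doors are open:
  sum over t >= 0 of the probability that not all doors are open after t knocks
  (possibly infinite).\<close>
definition expected_time :: "nat \<Rightarrow> config \<Rightarrow> (nat \<Rightarrow> nat) \<Rightarrow> ennreal" where
  "expected_time d \<phi> \<pi> =
     (\<Sum>t. ennreal (measure_pmf.prob (traj \<phi> \<pi> t) {hs. \<not> {1..d} \<subseteq> last hs}))"

end

theory Submission imports Defs begin

text \<open>Couple the processes through independent variables \<open>u\<^sub>i\<close>, uniform on \<open>[0,1]\<close>, one per
  door: at a knock with history \<open>X\<close>, a closed door \<open>i\<close> opens iff \<open>u\<^sub>i < \<phi> i X\<close>. By monotonicity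
  the thresholds met by \<open>u\<^sub>i\<close> increase along the knocks on door \<open>i\<close>, so while the door is
  closed \<open>u\<^sub>i\<close> is uniform on \<open>[b,1]\<close> for the last threshold \<open>b\<close>, and it falls below the next
  threshold \<open>c\<close> with probability \<open>(c - b) / (1 - b)\<close>: the coupled process has the law of
  \<open>traj\<close>. Along one sample \<open>u\<close>, domination and positive correlation of \<open>\<B>\<close> keep the
  open doors of \<open>\<B>\<close> among those of \<open>\<A>\<close> forever, so at each time \<open>\<A>\<close> is less likely to
  have a closed door, and summing over time compares the expected times.\<close>

definition unit_uniform :: "real measure" where
  "unit_uniform = uniform_measure lborel {0..1}"

lemma prob_space_unit_uniform: "prob_space unit_uniform"
  unfolding unit_uniform_def by (rule prob_space_uniform_measure) auto

lemma sets_unit_uniform [simp]: "sets unit_uniform = sets borel"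
  unfolding unit_uniform_def by simp

lemma measure_unit_uniform_tail:
  fixes b c :: real
  assumes "B \<in> sets borel" "B \<inter> {0..1} = {b..1}" "b \<le> c" "c \<le> 1"
  shows "measure unit_uniform B = 1 - b"
    and "measure unit_uniform (B \<inter> {..<c}) = c - b"
    and "measure unit_uniform (B \<inter> {c..}) = 1 - c"
proof -
  have m: "measure unit_uniform X = measure lborel ({0..1} \<inter> X)" if "X \<in> sets borel" for X
    using that unfolding unit_uniform_def by (subst measure_uniform_measure) auto
  have B: "{0..1} \<inter> B = {b..1}" using assms(2) by blast
  have "{b..1} \<inter> {..<c} = {b..<c}" "{b..1} \<inter> {c..} = {c..1}" using assms(3,4) by auto
  then have "{0..1} \<inter> (B \<inter> {..<c}) = {b..<c}" "{0..1} \<inter> (B \<inter> {c..}) = {c..1}"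
    by (simp_all add: Int_assoc[symmetric] B)
  then show "measure unit_uniform B = 1 - b"
    and "measure unit_uniform (B \<inter> {..<c}) = c - b"
    and "measure unit_uniform (B \<inter> {c..}) = 1 - c"
    using assms(1,3,4) by (simp_all add: m B)
qed

lemma conditional_prob_bounds:
  fixes b c :: real
  assumes "0 \<le> b" "b \<le> c" "c \<le> 1"
  defines "p \<equiv> (c - b) / (1 - b)"
  shows "0 \<le> p" "p \<le> 1" "p * (1 - b) = c - b" "(1 - p) * (1 - b) = 1 - c"
proof -
  have "b = 1 \<and> c = 1 \<or> b < 1" using assms by linarith
  then show "0 \<le> p" "p \<le> 1" "p * (1 - b) = c - b" "(1 - p) * (1 - b) = 1 - c"
    using assms by (auto simp: p_def divide_simps)
qed

lemma PiE_restrict_component: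
  "j \<in> J \<Longrightarrow> {u \<in> PiE J A. u j \<in> X} = PiE J (A(j := A j \<inter> X))"
  by (auto simp: PiE_iff extensional_def split: if_splits)

lemma last_list_all2: "list_all2 R xs ys \<Longrightarrow> xs \<noteq> [] \<Longrightarrow> R (last xs) (last ys)"
  by (induction rule: list_all2_induct)
    (auto simp: list_all2_Nil list_all2_Cons1 dest: list_all2_lengthD)

lemma integral_pmf_single:
  "(\<integral>z. (if z = y then c else 0) \<partial>measure_pmf p) = c * pmf p y"
proof -
  have "(\<integral>z. (if z = y then c else 0) \<partial>measure_pmf p) = (\<integral>z. indicator {y} z * c \<partial>measure_pmf p)"
    by (rule Bochner_Integration.integral_cong) (auto simp: indicator_def)
  also have "\<dots> = measure (measure_pmf p) {y} * c" by simp
  finally show ?thesis by (simp add: measure_pmf_single)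
qed

subsection \<open>Door histories and thresholds\<close>

definition door_hist :: "(nat \<Rightarrow> nat) \<Rightarrow> nat \<Rightarrow> nat \<Rightarrow> nat set list \<Rightarrow> nat set list" where
  "door_hist \<pi> i t hs = [hs ! m \<inter> {1..<i}. m \<leftarrow> [0..<t], \<pi> m = i]"

lemma knock_hist_eq_door_hist: "knock_hist \<pi> t hs = door_hist \<pi> (\<pi> t) (Suc t) hs"
  unfolding knock_hist_def door_hist_def by simp

lemma door_hist_Suc:
  "door_hist \<pi> i (Suc t) hs = door_hist \<pi> i t hs @ (if \<pi> t = i then [hs ! t \<inter> {1..<i}] else [])"
  unfolding door_hist_def by simp

lemma door_hist_append: "t \<le> length hs \<Longrightarrow> door_hist \<pi> i t (hs @ hs') = door_hist \<pi> i t hs"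
  unfolding door_hist_def by (auto simp: nth_append intro!: arg_cong[where f=concat] map_cong)

lemma valid_seq_knock_hist: "valid_seq (\<pi> t) (knock_hist \<pi> t hs)"
  unfolding valid_seq_def knock_hist_def by auto

lemma valid_seq_door_hist: "door_hist \<pi> i t hs \<noteq> [] \<Longrightarrow> valid_seq i (door_hist \<pi> i t hs)"
  unfolding valid_seq_def door_hist_def by auto

lemma door_hist_mono:
  assumes "list_all2 (\<subseteq>) hs' hs" "t \<le> length hs"
  shows "list_all2 (\<subseteq>) (door_hist \<pi> i t hs') (door_hist \<pi> i t hs)"
  using assms(2)
proof (induction t)
  case 0
  then show ?case by (simp add: door_hist_def)
next
  case (Suc t)
  then have "hs' ! t \<subseteq> hs ! t" using assms(1) by (simp add: list_all2_conv_all_nth)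
  with Suc show ?case by (auto simp: door_hist_Suc intro: list_all2_appendI)
qed

text \<open>The probability that door \<open>i\<close> has opened during the first \<open>t\<close> knocks of \<open>\<pi>\<close>, given the
  history \<open>hs\<close>; under the coupling, door \<open>i\<close> is open after \<open>t\<close> knocks iff \<open>u\<^sub>i\<close> is below it.\<close>
definition threshold :: "config \<Rightarrow> (nat \<Rightarrow> nat) \<Rightarrow> nat \<Rightarrow> nat \<Rightarrow> nat set list \<Rightarrow> real" where
  "threshold \<phi> \<pi> i t hs = phi0 \<phi> i (door_hist \<pi> i t hs)"

lemma threshold_Suc_self: "threshold \<phi> \<pi> (\<pi> t) (Suc t) hs = \<phi> (\<pi> t) (knock_hist \<pi> t hs)"
  by (simp add: threshold_def phi0_def door_hist_Suc knock_hist_eq_door_hist)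

lemma threshold_Suc_other: "\<pi> t \<noteq> i \<Longrightarrow> threshold \<phi> \<pi> i (Suc t) hs = threshold \<phi> \<pi> i t hs"
  by (simp add: threshold_def door_hist_Suc)

lemma threshold_append: "t \<le> length hs \<Longrightarrow> threshold \<phi> \<pi> i t (hs @ hs') = threshold \<phi> \<pi> i t hs"
  by (simp add: threshold_def door_hist_append)

lemma open_prob_eq_threshold:
  "open_prob \<phi> \<pi> t hs =
     (threshold \<phi> \<pi> (\<pi> t) (Suc t) hs - threshold \<phi> \<pi> (\<pi> t) t hs) / (1 - threshold \<phi> \<pi> (\<pi> t) t hs)"
  by (simp add: open_prob_def Let_def threshold_def knock_hist_eq_door_hist door_hist_Suc)

lemma threshold_bounds:
  assumes "is_configuration d \<phi>" "i \<in> {1..d}"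
  shows "0 \<le> threshold \<phi> \<pi> i t hs" "threshold \<phi> \<pi> i t hs \<le> 1"
  using assms valid_seq_door_hist[of \<pi> i t hs]
  unfolding is_configuration_def threshold_def phi0_def by auto

lemma threshold_mono_Suc:
  assumes "monotone_config d \<phi>" "is_configuration d \<phi>" "i \<in> {1..d}"
  shows "threshold \<phi> \<pi> i t hs \<le> threshold \<phi> \<pi> i (Suc t) hs"
proof (cases "\<pi> t = i")
  case True
  show ?thesis
  proof (cases "door_hist \<pi> i t hs = []")
    case True
    then show ?thesis using threshold_bounds[OF assms(2,3)] by (simp add: threshold_def phi0_def)
  next
    case False
    have ne: "door_hist \<pi> i (Suc t) hs \<noteq> []"
      using \<open>\<pi> t = i\<close> by (simp add: door_hist_Suc)
    have "subseq (door_hist \<pi> i t hs) (door_hist \<pi> i (Suc t) hs)"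
      by (simp add: door_hist_Suc subseq_rev_drop_many)
    then have "\<phi> i (door_hist \<pi> i t hs) \<le> \<phi> i (door_hist \<pi> i (Suc t) hs)"
      using assms(1,3) valid_seq_door_hist[OF False] valid_seq_door_hist[OF ne]
      unfolding monotone_config_def by blast
    then show ?thesis using False ne by (simp add: threshold_def phi0_def)
  qed
qed (simp add: threshold_Suc_other)

subsection \<open>The coupled process\<close>

definition coupled_step ::
    "config \<Rightarrow> (nat \<Rightarrow> nat) \<Rightarrow> nat \<Rightarrow> (nat \<Rightarrow> real) \<Rightarrow> nat set list \<Rightarrow> nat set" where
  "coupled_step \<phi> \<pi> t u hs =
     (if \<pi> t \<notin> last hs \<and> u (\<pi> t) < \<phi> (\<pi> t) (knock_hist \<pi> t hs)
      then insert (\<pi> t) (last hs) else last hs)"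

fun coupled_traj :: "config \<Rightarrow> (nat \<Rightarrow> nat) \<Rightarrow> (nat \<Rightarrow> real) \<Rightarrow> nat \<Rightarrow> nat set list" where
  "coupled_traj \<phi> \<pi> u 0 = [{}]"
| "coupled_traj \<phi> \<pi> u (Suc t) = coupled_traj \<phi> \<pi> u t @ [coupled_step \<phi> \<pi> t u (coupled_traj \<phi> \<pi> u t)]"

lemma length_coupled_traj [simp]: "length (coupled_traj \<phi> \<pi> u t) = Suc t"
  by (induction t) auto

lemma coupled_traj_not_Nil [simp]: "coupled_traj \<phi> \<pi> u t \<noteq> []"
  using length_coupled_traj[of \<phi> \<pi> u t] by (metis Zero_not_Suc list.size(3))

definition traj_step :: "config \<Rightarrow> (nat \<Rightarrow> nat) \<Rightarrow> nat \<Rightarrow> nat set list \<Rightarrow> nat set list pmf" where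
  "traj_step \<phi> \<pi> t hs = (if \<pi> t \<in> last hs then return_pmf (hs @ [last hs])
     else map_pmf (\<lambda>b. hs @ [if b then insert (\<pi> t) (last hs) else last hs])
            (bernoulli_pmf (open_prob \<phi> \<pi> t hs)))"

lemma traj_Suc_eq_bind: "traj \<phi> \<pi> (Suc t) = traj \<phi> \<pi> t \<bind> traj_step \<phi> \<pi> t"
  unfolding traj_step_def by simp

lemma pmf_traj_step_not_snoc: "(\<And>S. y \<noteq> hs @ [S]) \<Longrightarrow> pmf (traj_step \<phi> \<pi> t hs) y = 0"
  unfolding traj_step_def by (auto simp: pmf_eq_0_set_pmf)

lemma pmf_traj_step_snoc:
  assumes "0 \<le> open_prob \<phi> \<pi> t hs" "open_prob \<phi> \<pi> t hs \<le> 1"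
  shows "pmf (traj_step \<phi> \<pi> t hs) (hs @ [S]) =
     (if \<pi> t \<in> last hs then (if S = last hs then 1 else 0)
      else if S = insert (\<pi> t) (last hs) then open_prob \<phi> \<pi> t hs
      else if S = last hs then 1 - open_prob \<phi> \<pi> t hs else 0)"
proof (cases "\<pi> t \<in> last hs")
  case True
  then show ?thesis by (simp add: traj_step_def pmf_return)
next
  case False
  define g where "g = (\<lambda>b. hs @ [if b then insert (\<pi> t) (last hs) else last hs])"
  have step: "traj_step \<phi> \<pi> t hs = map_pmf g (bernoulli_pmf (open_prob \<phi> \<pi> t hs))"
    using False by (simp add: traj_step_def g_def)
  have "g -` {hs @ [S]} =
      (if S = insert (\<pi> t) (last hs) then {True} else if S = last hs then {False} else {})"
    using False by (auto simp: g_def insert_ident split: if_splits)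
  then show ?thesis
    using False assms by (simp add: step pmf_map measure_pmf_single)
qed

subsection \<open>The coupled process has the law of \<open>traj\<close>\<close>

locale knock_sequence =
  fixes d :: nat and \<pi> :: "nat \<Rightarrow> nat"
  assumes knock_in_doors: "\<And>t. \<pi> t \<in> {1..d}"
begin

abbreviation doors :: "nat set" where "doors \<equiv> {1..d}"

sublocale cube: finite_product_prob_space "\<lambda>_::nat. unit_uniform" doors
proof -
  interpret product_prob_space "\<lambda>_::nat. unit_uniform" doors
    by (rule product_prob_spaceI) (rule prob_space_unit_uniform)
  show "finite_product_prob_space (\<lambda>_::nat. unit_uniform) doors"
    by unfold_locales auto
qed

definition uniform_cube :: "(nat \<Rightarrow> real) measure" where
  "uniform_cube = PiM doors (\<lambda>_. unit_uniform)"

lemma space_uniform_cube: "space uniform_cube = PiE doors (\<lambda>_. UNIV)"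
  unfolding uniform_cube_def unit_uniform_def by (simp add: space_PiM)

lemma prob_space_uniform_cube: "prob_space uniform_cube"
  unfolding uniform_cube_def by (rule cube.prob_space_axioms)

lemma measure_box_update:
  assumes "\<forall>i\<in>doors. A i \<in> sets borel" "B \<in> sets borel" "j \<in> doors"
  shows "measure uniform_cube (PiE doors (A(j := B))) =
    measure unit_uniform B * (\<Prod>i\<in>doors - {j}. measure unit_uniform (A i))"
proof -
  have "measure uniform_cube (PiE doors (A(j := B))) =
      (\<Prod>i\<in>doors. measure unit_uniform ((A(j := B)) i))"
    unfolding uniform_cube_def using assms by (intro cube.prob_times) auto
  also have "\<dots> = measure unit_uniform B * (\<Prod>i\<in>doors - {j}. measure unit_uniform ((A(j := B)) i))"
    using assms(3) by (subst prod.remove[of _ j]) auto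
  also have "(\<Prod>i\<in>doors - {j}. measure unit_uniform ((A(j := B)) i)) =
      (\<Prod>i\<in>doors - {j}. measure unit_uniform (A i))"
    by (rule prod.cong) auto
  finally show ?thesis .
qed

definition coupled_event :: "config \<Rightarrow> nat \<Rightarrow> nat set list \<Rightarrow> (nat \<Rightarrow> real) set" where
  "coupled_event \<phi> t hs = {u \<in> space uniform_cube. coupled_traj \<phi> \<pi> u t = hs}"

lemma coupled_event_0: "coupled_event \<phi> 0 hs = (if hs = [{}] then space uniform_cube else {})"
  unfolding coupled_event_def by auto

lemma coupled_event_Nil: "coupled_event \<phi> (Suc t) [] = {}"
  unfolding coupled_event_def by auto

lemma coupled_event_snoc:
  "coupled_event \<phi> (Suc t) (hs @ [S]) = {u \<in> coupled_event \<phi> t hs. coupled_step \<phi> \<pi> t u hs = S}"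
  unfolding coupled_event_def by auto

lemma length_coupled_event: "coupled_event \<phi> t hs \<noteq> {} \<Longrightarrow> length hs = Suc t"
  unfolding coupled_event_def by auto

lemma coupled_event_snoc_box:
  assumes E: "coupled_event \<phi> t hs = PiE doors A"
    and j: "\<pi> t = j" and c: "\<phi> j (knock_hist \<pi> t hs) = c"
  shows "coupled_event \<phi> (Suc t) (hs @ [S]) =
     (if j \<in> last hs then (if S = last hs then PiE doors A else {})
      else if S = insert j (last hs) then PiE doors (A(j := A j \<inter> {..<c}))
      else if S = last hs then PiE doors (A(j := A j \<inter> {c..}))
      else {})"
proof -
  have jI: "j \<in> doors" using knock_in_doors j by blast
  have step: "coupled_step \<phi> \<pi> t u hs = (if j \<notin> last hs \<and> u j < c then insert j (last hs) else last hs)"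
    for u using j c by (simp add: coupled_step_def)
  consider "j \<in> last hs" | (opens) "j \<notin> last hs" "S = insert j (last hs)"
    | (stays) "j \<notin> last hs" "S = last hs" | "S \<noteq> insert j (last hs)" "S \<noteq> last hs"
    by blast
  then show ?thesis
  proof cases
    case opens
    then have "coupled_event \<phi> (Suc t) (hs @ [S]) = {u \<in> PiE doors A. u j \<in> {..<c}}"
      by (auto simp: coupled_event_snoc E step)
    then show ?thesis using opens PiE_restrict_component[OF jI, of A "{..<c}"] by simp
  next
    case stays
    then have "coupled_event \<phi> (Suc t) (hs @ [S]) = {u \<in> PiE doors A. u j \<in> {c..}}"
      by (auto simp: coupled_event_snoc E step)
    moreover have "S \<noteq> insert j (last hs)" using stays by auto
    ultimately show ?thesis using stays PiE_restrict_component[OF jI, of A "{c..}"] by simp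
  qed (auto simp: coupled_event_snoc E step)
qed

definition hist_space :: "nat \<Rightarrow> nat set list set" where
  "hist_space t = {hs. set hs \<subseteq> Pow doors \<and> length hs = Suc t}"

lemma finite_hist_space: "finite (hist_space t)"
  unfolding hist_space_def by (rule finite_lists_length_eq) auto

lemma coupled_traj_in_hist_space: "coupled_traj \<phi> \<pi> u t \<in> hist_space t"
proof (induction t)
  case (Suc t)
  have "last (coupled_traj \<phi> \<pi> u t) \<subseteq> doors"
    using Suc last_in_set[OF coupled_traj_not_Nil] unfolding hist_space_def by blast
  moreover have "coupled_step \<phi> \<pi> t u hs \<subseteq> insert (\<pi> t) (last hs)" for hs
    by (auto simp: coupled_step_def)
  ultimately have "coupled_step \<phi> \<pi> t u (coupled_traj \<phi> \<pi> u t) \<subseteq> doors"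
    using knock_in_doors[of t] by blast
  then show ?case using Suc by (simp add: hist_space_def)
qed (simp add: hist_space_def)

lemma coupled_preimage_eq_Union:
  "{u \<in> space uniform_cube. coupled_traj \<phi> \<pi> u t \<in> F} = (\<Union>hs\<in>F \<inter> hist_space t. coupled_event \<phi> t hs)"
  using coupled_traj_in_hist_space unfolding coupled_event_def by blast

context
  fixes \<phi> :: config
  assumes cfg: "is_configuration d \<phi>" and mono: "monotone_config d \<phi>"
begin

lemma coupled_event_box:
  "coupled_event \<phi> t hs = {} \<or>
     (\<exists>A. coupled_event \<phi> t hs = PiE doors A \<and> (\<forall>i\<in>doors. A i \<in> sets borel) \<and>
       (\<forall>i\<in>doors. i \<notin> last hs \<longrightarrow> A i \<inter> {0..1} = {threshold \<phi> \<pi> i t hs..1}))"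
proof (induction t arbitrary: hs)
  case 0
  show ?case
  proof (cases "hs = [{}]")
    case True
    then show ?thesis
      by (intro disjI2 exI[of _ "\<lambda>_. UNIV"])
        (auto simp: coupled_event_0 space_uniform_cube threshold_def door_hist_def phi0_def)
  qed (simp add: coupled_event_0)
next
  case (Suc t)
  show ?case
  proof (cases "coupled_event \<phi> (Suc t) hs = {}")
    case False
    then obtain hs0 S where hs: "hs = hs0 @ [S]"
      by (metis coupled_event_Nil rev_exhaust)
    then have ne: "coupled_event \<phi> t hs0 \<noteq> {}" using False by (auto simp: coupled_event_snoc)
    with Suc.IH obtain A where A: "coupled_event \<phi> t hs0 = PiE doors A" "\<forall>i\<in>doors. A i \<in> sets borel"
        "\<forall>i\<in>doors. i \<notin> last hs0 \<longrightarrow> A i \<inter> {0..1} = {threshold \<phi> \<pi> i t hs0..1}"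
      by blast
    define j where "j = \<pi> t"
    define c where "c = \<phi> j (knock_hist \<pi> t hs0)"
    have jI: "j \<in> doors" using knock_in_doors j_def by blast
    have thr: "threshold \<phi> \<pi> i (Suc t) (hs0 @ [S']) = (if i = j then c else threshold \<phi> \<pi> i t hs0)"
      for i S' using length_coupled_event[OF ne]
      by (simp add: threshold_append threshold_Suc_self threshold_Suc_other j_def c_def)
    have "threshold \<phi> \<pi> j t hs0 \<le> c"
      using threshold_mono_Suc[OF mono cfg jI, of \<pi> t hs0] by (simp add: j_def c_def threshold_Suc_self)
    moreover have "A j \<inter> {c..} \<inter> {0..1} = {threshold \<phi> \<pi> j t hs0..1} \<inter> {c..}" if "j \<notin> last hs0"
      using A(3) jI that by blast
    ultimately have Aj: "j \<notin> last hs0 \<Longrightarrow> A j \<inter> {c..} \<inter> {0..1} = {c..1}"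
      by auto
    note E = coupled_event_snoc_box[OF A(1) j_def[symmetric] c_def[symmetric], of S]
    consider (opened_before) "j \<in> last hs0" "S = last hs0"
      | (opens) "j \<notin> last hs0" "S = insert j (last hs0)"
      | (stays_closed) "j \<notin> last hs0" "S = last hs0"
      using False E by (auto simp: hs split: if_splits)
    then show ?thesis
    proof cases
      case opened_before
      then show ?thesis using A E by (intro disjI2 exI[of _ A]) (auto simp: hs thr)
    next
      case opens
      then show ?thesis using A E jI
        by (intro disjI2 exI[of _ "A(j := A j \<inter> {..<c})"]) (auto simp: hs thr)
    next
      case stays_closed
      then show ?thesis using A E jI Aj
        by (intro disjI2 exI[of _ "A(j := A j \<inter> {c..})"]) (auto simp: hs thr)
    qed
  qed simp
qed

lemma sets_coupled_event: "coupled_event \<phi> t hs \<in> sets uniform_cube"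
  using coupled_event_box[of t hs] by (auto simp: uniform_cube_def intro!: sets_PiM_I_finite)

lemma measure_coupled_event_snoc:
  "measure uniform_cube (coupled_event \<phi> (Suc t) (hs @ [S])) =
     pmf (traj_step \<phi> \<pi> t hs) (hs @ [S]) * measure uniform_cube (coupled_event \<phi> t hs)"
proof (cases "coupled_event \<phi> t hs = {}")
  case True
  then have "coupled_event \<phi> (Suc t) (hs @ [S]) = {}" by (simp add: coupled_event_snoc)
  with True show ?thesis by simp
next
  case False
  obtain A where A: "coupled_event \<phi> t hs = PiE doors A"
      "\<forall>i\<in>doors. A i \<in> sets borel"
      "\<forall>i\<in>doors. i \<notin> last hs \<longrightarrow> A i \<inter> {0..1} = {threshold \<phi> \<pi> i t hs..1}"
    using coupled_event_box[of t hs] False by (elim disjE exE conjE) simp_all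
  define j where "j = \<pi> t"
  define b where "b = threshold \<phi> \<pi> j t hs"
  define c where "c = threshold \<phi> \<pi> j (Suc t) hs"
  define R where "R = (\<Prod>i\<in>doors - {j}. measure unit_uniform (A i))"
  have jI: "j \<in> doors" using knock_in_doors j_def by blast
  have b0: "0 \<le> b" and bc: "b \<le> c" and c1: "c \<le> 1"
    using threshold_bounds[OF cfg jI] threshold_mono_Suc[OF mono cfg jI] by (auto simp: b_def c_def)
  have p: "open_prob \<phi> \<pi> t hs = (c - b) / (1 - b)"
    by (simp add: open_prob_eq_threshold b_def c_def j_def)
  note p_bounds = conditional_prob_bounds[OF b0 bc c1, folded p]
  note pmf_step = pmf_traj_step_snoc[OF p_bounds(1,2), of S, folded j_def]
  have "\<phi> j (knock_hist \<pi> t hs) = c" by (simp add: c_def j_def threshold_Suc_self)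
  note E = coupled_event_snoc_box[OF A(1) j_def[symmetric] this, of S]
  have m: "measure uniform_cube (PiE doors (A(j := B))) = measure unit_uniform B * R"
    if "B \<in> sets borel" for B
    unfolding R_def using measure_box_update[OF A(2) that jI] .
  have mE: "measure uniform_cube (coupled_event \<phi> t hs) = measure unit_uniform (A j) * R"
    using m[of "A j"] A(1,2) jI by simp
  show ?thesis
  proof (cases "j \<in> last hs")
    case True
    then show ?thesis using E pmf_step A(1) by simp
  next
    case False
    have Aj: "A j \<inter> {0..1} = {b..1}" using A(3) jI False by (simp add: b_def)
    have Aj_borel: "A j \<in> sets borel" using A(2) jI by blast
    note tail = measure_unit_uniform_tail[OF Aj_borel Aj bc c1]
    have AjB: "A j \<inter> X \<in> sets borel" if "X \<in> sets borel" for X using Aj_borel that by blast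
    have ne: "last hs \<noteq> insert j (last hs)" using False by auto
    consider (opens) "S = insert j (last hs)" | (stays_closed) "S = last hs"
      | "S \<noteq> insert j (last hs)" "S \<noteq> last hs"
      by blast
    then show ?thesis
    proof cases
      case opens
      then have "measure uniform_cube (coupled_event \<phi> (Suc t) (hs @ [S])) = (c - b) * R"
        using E False m[OF AjB] tail by simp
      then show ?thesis using opens False pmf_step mE tail p_bounds(3) by simp
    next
      case stays_closed
      then have "measure uniform_cube (coupled_event \<phi> (Suc t) (hs @ [S])) = (1 - c) * R"
        using E False ne m[OF AjB] tail by simp
      then show ?thesis using stays_closed ne False pmf_step mE tail p_bounds(4) by simp
    qed (use E False pmf_step in simp)
  qed
qed

lemma pmf_traj_eq_coupled: "pmf (traj \<phi> \<pi> t) hs = measure uniform_cube (coupled_event \<phi> t hs)"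
proof (induction t arbitrary: hs)
  case 0
  show ?case using prob_space.prob_space[OF prob_space_uniform_cube]
    by (simp add: coupled_event_0 pmf_return indicator_def)
next
  case (Suc t)
  show ?case
  proof (cases hs rule: rev_exhaust)
    case Nil
    have "pmf (traj \<phi> \<pi> (Suc t)) hs = (\<integral>z. 0 \<partial>measure_pmf (traj \<phi> \<pi> t))"
      unfolding traj_Suc_eq_bind pmf_bind using Nil
      by (intro Bochner_Integration.integral_cong refl pmf_traj_step_not_snoc) auto
    then show ?thesis by (simp add: Nil coupled_event_Nil)
  next
    case (snoc hs0 S)
    have "pmf (traj \<phi> \<pi> (Suc t)) hs =
        (\<integral>z. (if z = hs0 then pmf (traj_step \<phi> \<pi> t hs0) hs else 0) \<partial>measure_pmf (traj \<phi> \<pi> t))"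
      unfolding traj_Suc_eq_bind pmf_bind snoc
      by (intro Bochner_Integration.integral_cong refl) (auto intro: pmf_traj_step_not_snoc)
    then show ?thesis
      by (simp add: integral_pmf_single Suc.IH snoc measure_coupled_event_snoc)
  qed
qed

lemma sets_coupled_preimage: "{u \<in> space uniform_cube. coupled_traj \<phi> \<pi> u t \<in> F} \<in> sets uniform_cube"
  unfolding coupled_preimage_eq_Union using finite_hist_space sets_coupled_event by auto

lemma prob_traj_eq_coupled:
  "measure_pmf.prob (traj \<phi> \<pi> t) F = measure uniform_cube {u \<in> space uniform_cube. coupled_traj \<phi> \<pi> u t \<in> F}"
proof -
  interpret U: prob_space uniform_cube by (rule prob_space_uniform_cube)
  have "coupled_event \<phi> t hs = {}" if "hs \<notin> hist_space t" for hs
    using that coupled_traj_in_hist_space unfolding coupled_event_def by blast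
  then have "set_pmf (traj \<phi> \<pi> t) \<subseteq> hist_space t"
    by (force simp: set_pmf_eq pmf_traj_eq_coupled)
  then have "F \<inter> set_pmf (traj \<phi> \<pi> t) = (F \<inter> hist_space t) \<inter> set_pmf (traj \<phi> \<pi> t)"
    by blast
  then have "measure_pmf.prob (traj \<phi> \<pi> t) F = measure_pmf.prob (traj \<phi> \<pi> t) (F \<inter> hist_space t)"
    by (metis measure_Int_set_pmf)
  also have "\<dots> = (\<Sum>hs\<in>F \<inter> hist_space t. measure uniform_cube (coupled_event \<phi> t hs))"
    using finite_hist_space by (simp add: measure_measure_pmf_finite pmf_traj_eq_coupled)
  also have "\<dots> = measure uniform_cube (\<Union>hs\<in>F \<inter> hist_space t. coupled_event \<phi> t hs)"
    using finite_hist_space sets_coupled_event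
    by (intro measure_finite_Union[symmetric])
      (auto simp: disjoint_family_on_def coupled_event_def U.emeasure_finite)
  finally show ?thesis by (simp add: coupled_preimage_eq_Union)
qed

end

subsection \<open>Comparing the two configurations\<close>

lemma coupled_traj_mono:
  assumes pc: "pos_correlated d \<B>" and dom: "dominates d \<A> \<B>"
  shows "list_all2 (\<subseteq>) (coupled_traj \<B> \<pi> u t) (coupled_traj \<A> \<pi> u t)"
proof (induction t)
  case (Suc t)
  define hB hA j where "hB = coupled_traj \<B> \<pi> u t" and "hA = coupled_traj \<A> \<pi> u t" and "j = \<pi> t"
  have jI: "j \<in> doors" using knock_in_doors j_def by blast
  have IH: "list_all2 (\<subseteq>) hB hA" using Suc.IH by (simp add: hA_def hB_def)
  have last_sub: "last hB \<subseteq> last hA" using last_list_all2[OF IH] by (simp add: hB_def)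
  have "list_all2 (\<subseteq>) (knock_hist \<pi> t hB) (knock_hist \<pi> t hA)"
    unfolding knock_hist_eq_door_hist by (rule door_hist_mono[OF IH]) (simp add: hA_def)
  then have "\<B> j (knock_hist \<pi> t hB) \<le> \<B> j (knock_hist \<pi> t hA)"
    using pc jI valid_seq_knock_hist[of \<pi> t] unfolding pos_correlated_def j_def by blast
  also have "\<dots> \<le> \<A> j (knock_hist \<pi> t hA)"
    using dom jI valid_seq_knock_hist[of \<pi> t] unfolding dominates_def j_def by blast
  finally have "coupled_step \<B> \<pi> t u hB \<subseteq> coupled_step \<A> \<pi> t u hA"
    using last_sub by (auto simp: coupled_step_def j_def)
  then show ?case using IH by (simp add: hA_def hB_def list_all2_appendI)
qed simp

lemma prob_some_closed_mono:
  assumes "is_configuration d \<A>" "monotone_config d \<A>"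
    and "is_configuration d \<B>" "monotone_config d \<B>" "pos_correlated d \<B>"
    and "dominates d \<A> \<B>"
  defines "F \<equiv> {hs. \<not> doors \<subseteq> last hs}"
  shows "measure_pmf.prob (traj \<A> \<pi> t) F \<le> measure_pmf.prob (traj \<B> \<pi> t) F"
proof -
  interpret U: prob_space uniform_cube by (rule prob_space_uniform_cube)
  have "last (coupled_traj \<B> \<pi> u t) \<subseteq> last (coupled_traj \<A> \<pi> u t)" for u
    using last_list_all2[OF coupled_traj_mono[OF assms(5,6)]] by simp
  then have "{u \<in> space uniform_cube. coupled_traj \<A> \<pi> u t \<in> F} \<subseteq>
      {u \<in> space uniform_cube. coupled_traj \<B> \<pi> u t \<in> F}"
    unfolding F_def by blast
  then show ?thesis
    unfolding prob_traj_eq_coupled[OF assms(1,2)] prob_traj_eq_coupled[OF assms(3,4)]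
    by (rule U.finite_measure_mono) (rule sets_coupled_preimage[OF assms(3,4)])
qed

end

theorem mainTheorem9:
  fixes d :: nat and \<A> \<B> :: config and \<pi> :: "nat \<Rightarrow> nat"
  assumes "d \<ge> 2"
    and "is_configuration d \<A>" and "monotone_config d \<A>" and "pos_correlated d \<A>"
    and "is_configuration d \<B>" and "monotone_config d \<B>" and "pos_correlated d \<B>"
    and "dominates d \<A> \<B>"
    and "\<forall>t. \<pi> t \<in> {1..d}"
  shows "expected_time d \<A> \<pi> \<le> expected_time d \<B> \<pi>"
proof -
  interpret knock_sequence d \<pi> using assms(9) by unfold_locales blast
  have "ennreal (measure_pmf.prob (traj \<A> \<pi> t) {hs. \<not> {1..d} \<subseteq> last hs})
      \<le> ennreal (measure_pmf.prob (traj \<B> \<pi> t) {hs. \<not> {1..d} \<subseteq> last hs})" for t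
    using prob_some_closed_mono[OF assms(2,3,5,6,7,8)] by (rule ennreal_leI)
  then show ?thesis unfolding expected_time_def by (intro suminf_le) auto
qed

end
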